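(* Let $A$ be an associative algebra (with identity) over a field $\mathbf{k}$, let $q\in A$ be an idempotent, let $(A,q):=\{x\in A\mid qxq=qx\}$, and fix $k\in\mathbf{k}$. Then $(A,q)$ is a Lie algebra under the bracket $$[x,y]_{6,k}:=xy-yx-xyq+yxq+kxqy-kyqx,\qquad x,y\in(A,q).$$
   Context: $(A,q)$ is the (right) invariant algebra induced by the idempotent $q$; it is a subalgebra of $A$. The resulting Lie algebra is denoted $Lie((A,q),[\,,\,]_{6,k})$. *)

theory Defs
  imports Main "HOL.Vector_Spaces"
begin

definition assoc_algebra :: "('k::field \<Rightarrow> 'a::ring_1 \<Rightarrow> 'a) \<Rightarrow> bool" where
  "assoc_algebra scale \<longleftrightarrow> vector_space scale \<and>
     (\<forall>c x y. scale c (x * y) = scale c x * y) \<and>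
     (\<forall>c x y. scale c (x * y) = x * scale c y)"

definition inv_alg :: "'a::ring_1 \<Rightarrow> 'a set" where
  "inv_alg q = {x. q * x * q = q * x}"

definition bracket6 :: "('k \<Rightarrow> 'a::ring_1 \<Rightarrow> 'a) \<Rightarrow> 'k \<Rightarrow> 'a \<Rightarrow> 'a \<Rightarrow> 'a \<Rightarrow> 'a" where
  "bracket6 scale k q x y =
     x * y - y * x - x * y * q + y * x * q + scale k (x * q * y) - scale k (y * q * x)"

definition lie_algebra_on ::
  "('k::field \<Rightarrow> 'a::ab_group_add \<Rightarrow> 'a) \<Rightarrow> 'a set \<Rightarrow> ('a \<Rightarrow> 'a \<Rightarrow> 'a) \<Rightarrow> bool" where
  "lie_algebra_on scale L br \<longleftrightarrow>
     module.subspace scale L \<and>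
     (\<forall>x\<in>L. \<forall>y\<in>L. br x y \<in> L) \<and>
     (\<forall>a b. \<forall>x\<in>L. \<forall>y\<in>L. \<forall>z\<in>L.
        br (scale a x + scale b y) z = scale a (br x z) + scale b (br y z)) \<and>
     (\<forall>a b. \<forall>x\<in>L. \<forall>y\<in>L. \<forall>z\<in>L.
        br z (scale a x + scale b y) = scale a (br z x) + scale b (br z y)) \<and>
     (\<forall>x\<in>L. br x x = 0) \<and>
     (\<forall>x\<in>L. \<forall>y\<in>L. \<forall>z\<in>L. br x (br y z) + br y (br z x) + br z (br x y) = 0)"

end

theory Submission
  imports Defs
begin

text \<open>An element x lies in (A,q) iff q x (1 - q) = 0. The bracket [x,y]_{6,k} is the commutator
  of the deformed product x \<circ> y = x y (1 - q) + k x q y, which is bilinear, maps (A,q) into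
  itself, and is associative on (A,q) because x \<circ> (y \<circ> z) - (x \<circ> y) \<circ> z is a multiple
  of q z (1 - q). The commutator of an associative bilinear product always satisfies the
  Jacobi identity.\<close>

lemma lie_algebra_on_commutator:
  fixes scale :: "'k::field \<Rightarrow> 'a::ab_group_add \<Rightarrow> 'a"
  assumes vs: "vector_space scale"
    and subspace: "module.subspace scale L"
    and closed: "\<And>x y. x \<in> L \<Longrightarrow> y \<in> L \<Longrightarrow> m x y \<in> L"
    and linear_left: "\<And>a b x y z. x \<in> L \<Longrightarrow> y \<in> L \<Longrightarrow> z \<in> L \<Longrightarrow>
      m (scale a x + scale b y) z = scale a (m x z) + scale b (m y z)"
    and linear_right: "\<And>a b x y z. x \<in> L \<Longrightarrow> y \<in> L \<Longrightarrow> z \<in> L \<Longrightarrow>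
      m z (scale a x + scale b y) = scale a (m z x) + scale b (m z y)"
    and assoc: "\<And>x y z. x \<in> L \<Longrightarrow> y \<in> L \<Longrightarrow> z \<in> L \<Longrightarrow> m (m x y) z = m x (m y z)"
  shows "lie_algebra_on scale L (\<lambda>x y. m x y - m y x)"
proof -
  interpret vector_space scale by (rule vs)
  have diff_left: "m (x - y) z = m x z - m y z" if "x \<in> L" "y \<in> L" "z \<in> L" for x y z
    using linear_left[OF that, of 1 "- 1"] by (simp add: scale_minus_left)
  have diff_right: "m z (x - y) = m z x - m z y" if "x \<in> L" "y \<in> L" "z \<in> L" for x y z
    using linear_right[OF that, of 1 "- 1"] by (simp add: scale_minus_left)
  show ?thesis
    unfolding lie_algebra_on_def
  proof (intro conjI ballI allI)
    show "module.subspace scale L" by (rule subspace)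
  next
    fix x y assume "x \<in> L" "y \<in> L"
    then show "m x y - m y x \<in> L"
      using subspace closed by (simp add: subspace_diff)
  next
    fix a b x y z assume L: "x \<in> L" "y \<in> L" "z \<in> L"
    show "m (scale a x + scale b y) z - m z (scale a x + scale b y)
        = scale a (m x z - m z x) + scale b (m y z - m z y)"
      using L by (simp add: linear_left linear_right scale_right_diff_distrib algebra_simps)
    show "m z (scale a x + scale b y) - m (scale a x + scale b y) z
        = scale a (m z x - m x z) + scale b (m z y - m y z)"
      using L by (simp add: linear_left linear_right scale_right_diff_distrib algebra_simps)
  next
    fix x y z assume L: "x \<in> L" "y \<in> L" "z \<in> L"
    show "(m x (m y z - m z y) - m (m y z - m z y) x) + (m y (m z x - m x z) - m (m z x - m x z) y)
        + (m z (m x y - m y x) - m (m x y - m y x) z) = 0"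
      using L by (simp add: diff_left diff_right closed assoc)
  qed simp
qed

locale associative_algebra =
  fixes scale :: "'k::field \<Rightarrow> 'a::ring_1 \<Rightarrow> 'a"
  assumes assoc_algebra: "assoc_algebra scale"
begin

sublocale vector_space scale
  using assoc_algebra by (simp add: assoc_algebra_def)

lemma scale_mult_left: "scale c x * y = scale c (x * y)"
  and scale_mult_right: "x * scale c y = scale c (x * y)"
  using assoc_algebra unfolding assoc_algebra_def by metis+

lemma inv_alg_subspace: "subspace (inv_alg q)"
  unfolding subspace_def inv_alg_def
  by (simp add: algebra_simps scale_mult_left scale_mult_right)

definition deformed_mult :: "'k \<Rightarrow> 'a \<Rightarrow> 'a \<Rightarrow> 'a \<Rightarrow> 'a" where
  "deformed_mult k q x y = x * y * (1 - q) + scale k (x * q * y)"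

lemma bracket6_eq_commutator:
  "bracket6 scale k q x y = deformed_mult k q x y - deformed_mult k q y x"
  by (simp add: bracket6_def deformed_mult_def algebra_simps)

lemma deformed_mult_linear_left:
  "deformed_mult k q (scale a x + scale b y) z
    = scale a (deformed_mult k q x z) + scale b (deformed_mult k q y z)"
  and deformed_mult_linear_right:
  "deformed_mult k q z (scale a x + scale b y)
    = scale a (deformed_mult k q z x) + scale b (deformed_mult k q z y)"
  unfolding deformed_mult_def
  by (simp_all add: ring_distribs scale_mult_left scale_mult_right scale_right_distrib
      scale_right_diff_distrib mult.assoc mult.commute)

lemma deformed_mult_assoc:
  assumes idem: "q * q = q" and z: "z \<in> inv_alg q"
  shows "deformed_mult k q (deformed_mult k q x y) z
       = deformed_mult k q x (deformed_mult k q y z)"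
proof -
  have qz: "q * (z * q) = q * z" and qzw: "q * (z * (q * w)) = q * (z * w)" for w
    using z unfolding inv_alg_def by (simp_all add: mult.assoc) (metis mult.assoc)
  have qq: "q * (q * w) = q * w" for w
    using idem by (simp flip: mult.assoc)
  show ?thesis
    unfolding deformed_mult_def
    by (simp add: algebra_simps scale_mult_left scale_mult_right idem qq qz qzw)
qed

lemma deformed_mult_closed:
  assumes idem: "q * q = q" and x: "x \<in> inv_alg q" and y: "y \<in> inv_alg q"
  shows "deformed_mult k q x y \<in> inv_alg q"
proof -
  have qx: "q * (x * q) = q * x" and qy: "q * (y * q) = q * y"
    using x y unfolding inv_alg_def by (simp_all add: mult.assoc)
  have qxy: "q * (x * (y * q)) = q * (x * y)" and qxqy: "q * (x * (q * y)) = q * (x * y)"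
    using qx qy by (metis mult.assoc)+
  have qq: "q * (q * w) = q * w" for w
    using idem by (simp flip: mult.assoc)
  show ?thesis
    unfolding deformed_mult_def inv_alg_def
    by (simp add: ring_distribs scale_mult_left scale_mult_right scale_right_distrib
        scale_right_diff_distrib mult.assoc idem qq qx qy qxy qxqy)
qed

end

theorem proposition1p2:
  fixes scale :: "'k::field \<Rightarrow> 'a::ring_1 \<Rightarrow> 'a" and q :: 'a and k :: 'k
  assumes "assoc_algebra scale"
    and "q * q = q"
  shows "lie_algebra_on scale (inv_alg q) (bracket6 scale k q)"
proof -
  interpret associative_algebra scale
    using assms(1) by unfold_locales
  have "lie_algebra_on scale (inv_alg q) (\<lambda>x y. deformed_mult k q x y - deformed_mult k q y x)"
    by (rule lie_algebra_on_commutator)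
      (simp_all add: vector_space_axioms inv_alg_subspace deformed_mult_linear_left
        deformed_mult_linear_right deformed_mult_closed deformed_mult_assoc assms(2))
  moreover have "bracket6 scale k q = (\<lambda>x y. deformed_mult k q x y - deformed_mult k q y x)"
    by (simp add: fun_eq_iff bracket6_eq_commutator)
  ultimately show ?thesis
    by simp
qed

end
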